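(* Let $V$ be a finite set of $n$ agents in the uncorrelated-signals setting of the context, assume common knowledge of beliefs (for all $u,w\in V$, $X_u$ is a.s.\ $\mathcal{F}_w$-measurable) and let $X$ be such that almost surely $X=X_u$ for all $u\in V$; let $L$ be the corresponding common optimal action set ($L=\{0\}$ if $X<1/2$, $L=\{1\}$ if $X>1/2$, $L=\{0,1\}$ if $X=1/2$). Then, with $D=D(\mu_1,\mu_0)$ the noise to signal ratio, $$\mathbb{P}(L=\{S\})\ \ge\ 1-\frac{4D}{n+D}.$$
   Context: The state $S$ is uniform on $\{0,1\}$. $\mu_0\neq\mu_1$ are mutually absolutely continuous probability measures on $(\Omega,\mathcal{O})$, and $z(\omega)=\log\frac{d\mu_1}{d\mu_0}(\omega)$; assume $z$ has finite second moment under both $\mu_0$ and $\mu_1$. Uncorrelated-signals setting: $V$ is a set of $n$ agents, agent $u$ has private signal $W_u\in\Omega$; conditionally on $S$, each $W_u$ has law $\mu_S$ (the joint law may be dependent), and with $z_u=z(W_u)$ one has $\mathrm{Cov}(z_u,z_v\mid S)=0$ for all distinct $u,v\in V$. Each agent's information is a $\sigma$-algebra $\mathcal{F}_u$ with $\sigma(W_u)\subseteq\mathcal{F}_u\subseteq\sigma(W_v:v\in V)$, and $X_u=\mathbb{P}(S=1\mid\mathcal{F}_u)$. The noise to signal ratio is $$D(\mu_1,\mu_0)=2\,\frac{\mathrm{Var}_{\mu_1}(z)+\mathrm{Var}_{\mu_0}(z)}{\big(D_{KL}(\mu_1\|\mu_0)+D_{KL}(\mu_0\|\mu_1)\big)^2},$$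 where $\mathrm{Var}_{\mu_s}(z)$ is the variance of $z$ under $\mu_s$ and $D_{KL}$ is the Kullback–Leibler divergence. *)

theory Defs
  imports "HOL-Probability.Probability"
begin

text \<open>Log-likelihood ratio z = log (d mu1 / d mu0) (natural logarithm).\<close>
definition llr :: "'o measure \<Rightarrow> 'o measure \<Rightarrow> 'o \<Rightarrow> real" where
  "llr mu1 mu0 = (\<lambda>x. ln (enn2real (RN_deriv mu0 mu1 x)))"

text \<open>Kullback-Leibler divergence D_KL(mu1 || mu0) with natural logarithm.\<close>
definition KL :: "'o measure \<Rightarrow> 'o measure \<Rightarrow> real" where
  "KL mu1 mu0 = KL_divergence (exp 1) mu0 mu1"

definition noise_signal_ratio :: "'o measure \<Rightarrow> 'o measure \<Rightarrow> real" where
  "noise_signal_ratio mu1 mu0 =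
     2 * (prob_space.variance mu1 (llr mu1 mu0) + prob_space.variance mu0 (llr mu1 mu0))
       / (KL mu1 mu0 + KL mu0 mu1)\<^sup>2"

definition cond_exp_event :: "'w measure \<Rightarrow> 'w set \<Rightarrow> ('w \<Rightarrow> real) \<Rightarrow> real" where
  "cond_exp_event M B Y = (LINT x|M. indicator B x * Y x) / measure M B"

definition cond_cov_event :: "'w measure \<Rightarrow> 'w set \<Rightarrow> ('w \<Rightarrow> real) \<Rightarrow> ('w \<Rightarrow> real) \<Rightarrow> real" where
  "cond_cov_event M B Y Z =
     cond_exp_event M B (\<lambda>x. Y x * Z x) - cond_exp_event M B Y * cond_exp_event M B Z"

text \<open>Optimal action set given belief x = P(S = 1 | ...).\<close>
definition opt_actions :: "real \<Rightarrow> nat set" where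
  "opt_actions x = (if x < 1/2 then {0} else if x > 1/2 then {1} else {0, 1})"

end

theory Submission
  imports Defs
begin

text \<open>
  The common belief X is, for every agent u, a version of P(S = 1 | F u).
  Let z u = z(W u), K = E1 z - E0 z (positive by Gibbs' inequality), let the deviation of
  agent u be z u - E_S z (its statistic centred at the mean of the true state) and let the
  residual be e = 1{S = 1} - X.  Then:
  (1) conditional uncorrelatedness gives E[(sum of deviations)^2] = n (Var0 z + Var1 z) / 2;
  (2) z u - E0 z is F u-measurable, hence orthogonal to e, while E[1{S = 1} e] = E[e^2];
      so every deviation satisfies E[deviation * e] = - K E[e^2];
  (3) by Cauchy-Schwarz, (n K)^2 E[e^2] <= n (Var0 z + Var1 z) / 2, i.e. 4 E[e^2] <= D / n;
  (4) wherever the optimal action set misses S we have e^2 >= 1/4, so the probability of a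
      miss is at most 4 E[e^2] <= D / n, and 1 - D/n implies the stated 1 - 4D/(n + D).
\<close>

section \<open>The log-likelihood ratio of two mutually absolutely continuous laws\<close>

lemma llr_measurable [measurable]: "llr mu1 mu0 \<in> borel_measurable mu0"
  unfolding llr_def by measurable

locale likelihood_pair = M0: prob_space mu0 + M1: prob_space mu1
  for mu0 mu1 :: "'o measure" +
  assumes sets_eq: "sets mu1 = sets mu0"
    and ac01: "absolutely_continuous mu0 mu1"
    and ac10: "absolutely_continuous mu1 mu0"
begin

abbreviation z :: "'o \<Rightarrow> real" where "z \<equiv> llr mu1 mu0"

lemma llr_measurable1 [measurable]: "z \<in> borel_measurable mu1"
  using llr_measurable[of mu1 mu0] sets_eq by (simp cong: measurable_cong_sets)

lemma RN_deriv_reciprocal: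
  "AE x in mu0. 0 < enn2real (RN_deriv mu0 mu1 x)
     \<and> RN_deriv mu0 mu1 x = ennreal (enn2real (RN_deriv mu0 mu1 x))
     \<and> enn2real (RN_deriv mu1 mu0 x) = 1 / enn2real (RN_deriv mu0 mu1 x)"
proof -
  define f where "f x = enn2real (RN_deriv mu0 mu1 x)" for x
  have f_meas0 [measurable]: "f \<in> borel_measurable mu0"
    unfolding f_def by measurable
  have [measurable]: "f \<in> borel_measurable mu1"
    using f_meas0 sets_eq by (simp cong: measurable_cong_sets)
  obtain D where D: "AE x in mu0. RN_deriv mu0 mu1 x = ennreal (D x)" "AE x in mu1. 0 < D x"
    using M0.real_RN_deriv[OF _ ac01 sets_eq] M1.finite_measure_axioms by metis
  have "AE x in mu0. 0 < D x"
    using absolutely_continuous_AE[OF sets_eq[symmetric] ac10 D(2)] .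
  with D(1) have f_pos: "AE x in mu0. 0 < f x \<and> RN_deriv mu0 mu1 x = ennreal (f x)"
    by eventually_elim (auto simp: f_def)
  have "density mu1 (\<lambda>x. ennreal (1 / f x)) = mu0"
  proof (rule measure_eqI)
    fix A assume "A \<in> sets (density mu1 (\<lambda>x. ennreal (1 / f x)))"
    then have A[measurable]: "A \<in> sets mu0" using sets_eq by simp
    have "emeasure (density mu1 (\<lambda>x. ennreal (1 / f x))) A
        = (\<integral>\<^sup>+ x. ennreal (1 / f x) * indicator A x \<partial>mu1)"
      using sets_eq by (subst emeasure_density) auto
    also have "\<dots> = (\<integral>\<^sup>+ x. RN_deriv mu0 mu1 x * (ennreal (1 / f x) * indicator A x) \<partial>mu0)"
      using A by (intro M0.RN_deriv_nn_integral[OF ac01 sets_eq]) measurable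
    also have "\<dots> = (\<integral>\<^sup>+ x. indicator A x \<partial>mu0)"
      using f_pos by (intro nn_integral_cong_AE) (auto simp: ennreal_mult''[symmetric] indicator_def)
    also have "\<dots> = emeasure mu0 A" by simp
    finally show "emeasure (density mu1 (\<lambda>x. ennreal (1 / f x))) A = emeasure mu0 A" .
  qed (use sets_eq in simp)
  then have "AE x in mu1. ennreal (1 / f x) = RN_deriv mu1 mu0 x"
    by (intro M1.RN_deriv_unique) measurable
  then have "AE x in mu0. ennreal (1 / f x) = RN_deriv mu1 mu0 x"
    using absolutely_continuous_AE[OF sets_eq[symmetric] ac10] by blast
  with f_pos show ?thesis
    by eventually_elim (auto simp: f_def[symmetric] dest: sym)
qed

lemma llr_swap: "AE x in mu0. ln (enn2real (RN_deriv mu1 mu0 x)) = - z x"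
  using RN_deriv_reciprocal by eventually_elim (simp add: llr_def ln_div)

lemma KL_eq_llr_mean: "KL mu1 mu0 = (\<integral>x. z x \<partial>mu1)"
  unfolding KL_def KL_divergence_def entropy_density_def llr_def
  by (simp add: comp_def log_def)

lemma KL_swap_eq_llr_mean: "KL mu0 mu1 = - (\<integral>x. z x \<partial>mu0)"
proof -
  have [measurable]: "(\<lambda>x. ln (enn2real (RN_deriv mu1 mu0 x))) \<in> borel_measurable mu0"
    using sets_eq by (simp cong: measurable_cong_sets)
  have "KL mu0 mu1 = (\<integral>x. ln (enn2real (RN_deriv mu1 mu0 x)) \<partial>mu0)"
    unfolding KL_def KL_divergence_def entropy_density_def by (simp add: comp_def log_def)
  also have "\<dots> = (\<integral>x. - z x \<partial>mu0)"
    using llr_swap by (intro integral_cong_AE) auto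
  finally show ?thesis by simp
qed

end

lemma nonneg_mult_ln: "0 < x \<Longrightarrow> 0 \<le> (x - 1) * ln (x :: real)"
  by (cases "x \<ge> 1") (simp_all add: mult_nonpos_nonpos)

locale distinct_likelihood_pair = likelihood_pair +
  assumes distinct: "mu0 \<noteq> mu1"
    and llr_square_integrable0: "integrable mu0 (\<lambda>x. (z x)\<^sup>2)"
    and llr_square_integrable1: "integrable mu1 (\<lambda>x. (z x)\<^sup>2)"
begin

lemma llr_integrable0: "integrable mu0 z"
  using M0.square_integrable_imp_integrable[OF _ llr_square_integrable0] by simp

lemma llr_integrable1: "integrable mu1 z"
  using M1.square_integrable_imp_integrable[OF _ llr_square_integrable1] by simp

text \<open>Gibbs' inequality in the form \<open>E\<^sub>1 z > E\<^sub>0 z\<close>: writing \<open>f = d\<mu>\<^sub>1/d\<mu>\<^sub>0\<close>, the gap is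
  \<open>\<integral>(f - 1) ln f d\<mu>\<^sub>0\<close>, whose integrand is nonnegative and vanishes only where \<open>f = 1\<close>.\<close>
lemma llr_mean_gap_pos: "(\<integral>x. z x \<partial>mu1) - (\<integral>x. z x \<partial>mu0) > 0"
proof -
  define f where "f x = enn2real (RN_deriv mu0 mu1 x)" for x
  have z_eq: "z x = ln (f x)" for x unfolding f_def llr_def ..
  have f_pos: "AE x in mu0. 0 < f x \<and> RN_deriv mu0 mu1 x = ennreal (f x)"
    using RN_deriv_reciprocal by eventually_elim (simp add: f_def)
  have fz_int: "integrable mu0 (\<lambda>x. f x * z x)"
    using M0.RN_deriv_integrable[OF M1.sigma_finite_measure_axioms ac01 sets_eq]
      llr_integrable1 by (simp add: f_def)
  have g_int: "integrable mu0 (\<lambda>x. (f x - 1) * z x)"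
    using Bochner_Integration.integrable_diff[OF fz_int llr_integrable0]
    by (simp add: algebra_simps)
  have gap: "(\<integral>x. z x \<partial>mu1) - (\<integral>x. z x \<partial>mu0) = (\<integral>x. (f x - 1) * z x \<partial>mu0)"
    using M0.RN_deriv_integral[OF M1.sigma_finite_measure_axioms ac01 sets_eq]
      Bochner_Integration.integral_diff[OF fz_int llr_integrable0]
    by (simp add: f_def algebra_simps)
  have g_nonneg: "AE x in mu0. 0 \<le> (f x - 1) * z x"
    using f_pos by eventually_elim (simp add: z_eq nonneg_mult_ln)
  show ?thesis
  proof (rule ccontr)
    assume "\<not> ?thesis"
    with gap integral_nonneg_AE[OF g_nonneg]
    have "(\<integral>x. (f x - 1) * z x \<partial>mu0) = 0" by linarith
    then have "AE x in mu0. (f x - 1) * z x = 0"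
      using integral_nonneg_eq_0_iff_AE[OF g_int g_nonneg] by simp
    with f_pos have "AE x in mu0. RN_deriv mu0 mu1 x = 1"
      by eventually_elim (auto simp: z_eq)
    then have "density mu0 (RN_deriv mu0 mu1) = density mu0 (\<lambda>_. 1)"
      by (intro density_cong) auto
    then have "mu1 = mu0"
      using M0.density_RN_deriv[OF ac01 sets_eq] by (simp add: density_1)
    with distinct show False by simp
  qed
qed

text \<open>The log-likelihood ratio is not a.s. constant under \<open>\<mu>\<^sub>0\<close>: otherwise it would be the same
  constant under \<open>\<mu>\<^sub>1\<close>, contradicting the mean gap.\<close>
lemma llr_variance0_pos: "M0.variance z > 0"
proof (rule ccontr)
  define m where "m = M0.expectation z"
  assume "\<not> M0.variance z > 0"
  moreover have "M0.variance z \<ge> 0" by (rule integral_nonneg_AE) auto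
  ultimately have "M0.variance z = 0" by linarith
  moreover have "integrable mu0 (\<lambda>x. (z x - m)\<^sup>2)"
    using llr_square_integrable0 llr_integrable0 by (simp add: power2_diff)
  ultimately have "AE x in mu0. (z x - m)\<^sup>2 = 0"
    using integral_nonneg_eq_0_iff_AE[of mu0 "\<lambda>x. (z x - m)\<^sup>2"] by (simp add: m_def)
  then have "AE x in mu1. z x = m"
    using absolutely_continuous_AE[OF sets_eq ac01] by auto
  then have "(\<integral>x. z x \<partial>mu1) = m"
    using integral_cong_AE[of z mu1 "\<lambda>_. m"] by (simp add: M1.prob_space)
  with llr_mean_gap_pos show False by (simp add: m_def)
qed

lemma noise_signal_ratio_eq:
  "noise_signal_ratio mu1 mu0
     = 2 * (M1.variance z + M0.variance z) / ((\<integral>x. z x \<partial>mu1) - (\<integral>x. z x \<partial>mu0))\<^sup>2"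
  unfolding noise_signal_ratio_def KL_eq_llr_mean KL_swap_eq_llr_mean by simp

lemma noise_signal_ratio_pos: "noise_signal_ratio mu1 mu0 > 0"
proof -
  have "M1.variance z \<ge> 0" by (rule integral_nonneg_AE) auto
  with llr_variance0_pos have "M1.variance z + M0.variance z > 0" by linarith
  with llr_mean_gap_pos show ?thesis
    unfolding noise_signal_ratio_eq by (intro divide_pos_pos) auto
qed

end

text \<open>A product of two square-integrable real functions is integrable
  (pointwise \<open>|f g| \<le> f\<^sup>2 + g\<^sup>2\<close>).\<close>
lemma integrable_mult_of_squares:
  fixes f g :: "'a \<Rightarrow> real"
  assumes [measurable]: "f \<in> borel_measurable M" "g \<in> borel_measurable M"
    and f2: "integrable M (\<lambda>x. (f x)\<^sup>2)" and g2: "integrable M (\<lambda>x. (g x)\<^sup>2)"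
  shows "integrable M (\<lambda>x. f x * g x)"
proof (rule Bochner_Integration.integrable_bound[OF Bochner_Integration.integrable_add[OF f2 g2]])
  have "\<bar>f x * g x\<bar> \<le> (f x)\<^sup>2 + (g x)\<^sup>2" for x
  proof -
    have "2 * \<bar>f x\<bar> * \<bar>g x\<bar> \<le> (f x)\<^sup>2 + (g x)\<^sup>2"
      using sum_squares_bound[of "\<bar>f x\<bar>" "\<bar>g x\<bar>"] by (simp add: power2_abs)
    moreover have "0 \<le> \<bar>f x\<bar> * \<bar>g x\<bar>" by simp
    ultimately have "\<bar>f x\<bar> * \<bar>g x\<bar> \<le> (f x)\<^sup>2 + (g x)\<^sup>2" by linarith
    then show ?thesis by (simp add: abs_mult)
  qed
  then show "AE x in M. norm (f x * g x) \<le> norm ((f x)\<^sup>2 + (g x)\<^sup>2)" by auto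
qed measurable

lemma event_integral_by_law:
  assumes M: "prob_space M" and mu: "prob_space mu" and sets_eq: "sets mu = sets mu0"
    and W_meas [measurable]: "W \<in> M \<rightarrow>\<^sub>M mu0" and B [measurable]: "B \<in> sets M"
    and c: "c \<ge> 0"
    and law: "\<And>A. A \<in> sets mu0 \<Longrightarrow> measure M ({w \<in> space M. W w \<in> A} \<inter> B) = measure mu A * c"
    and h [measurable]: "h \<in> borel_measurable mu0" and h_int: "integrable mu h"
  shows "integrable M (\<lambda>w. indicator B w * h (W w))"
    "(\<integral>w. indicator B w * h (W w) \<partial>M) = c * integral\<^sup>L mu h"
proof -
  interpret P: prob_space M by fact
  interpret Q: prob_space mu by fact
  define MB where "MB = density M (\<lambda>w. ennreal (indicator B w))"
  have [measurable]: "W \<in> MB \<rightarrow>\<^sub>M mu0" unfolding MB_def by simp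
  have distr_eq: "distr MB mu0 W = density mu (\<lambda>_. ennreal c)"
  proof (rule measure_eqI)
    fix A assume "A \<in> sets (distr MB mu0 W)"
    then have A [measurable]: "A \<in> sets mu0" by simp
    have "emeasure (distr MB mu0 W) A = emeasure MB (W -` A \<inter> space MB)"
      by (rule emeasure_distr) auto
    also have "\<dots> = (\<integral>\<^sup>+ w. ennreal (indicator B w) * indicator (W -` A \<inter> space M) w \<partial>M)"
      unfolding MB_def by (subst emeasure_density) (auto intro!: measurable_sets[OF W_meas])
    also have "\<dots> = (\<integral>\<^sup>+ w. indicator ({w \<in> space M. W w \<in> A} \<inter> B) w \<partial>M)"
      by (intro nn_integral_cong) (auto simp: indicator_def)
    also have "\<dots> = emeasure M ({w \<in> space M. W w \<in> A} \<inter> B)"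
      by (intro nn_integral_indicator) measurable
    also have "\<dots> = ennreal (measure mu A * c)"
      by (simp add: P.emeasure_eq_measure law)
    also have "\<dots> = emeasure (density mu (\<lambda>_. ennreal c)) A"
      using sets_eq c
      by (simp add: emeasure_density_const Q.emeasure_eq_measure ennreal_mult' mult.commute)
    finally show "emeasure (distr MB mu0 W) A = emeasure (density mu (\<lambda>_. ennreal c)) A" .
  qed (use sets_eq in simp)
  have "integrable (density mu (\<lambda>_. ennreal c)) h"
    using c h_int sets_eq by (subst integrable_density) (auto cong: measurable_cong_sets)
  then have "integrable MB (\<lambda>w. h (W w))"
    using distr_eq integrable_distr_eq[of W MB mu0 h] by simp
  then show "integrable M (\<lambda>w. indicator B w * h (W w))"
    unfolding MB_def by (subst (asm) integrable_density) auto
  have "(\<integral>w. indicator B w * h (W w) \<partial>M) = integral\<^sup>L (distr MB mu0 W) h"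
    unfolding MB_def by (subst integral_distr) (auto simp: integral_density)
  also have "\<dots> = c * integral\<^sup>L mu h"
    using c sets_eq by (simp add: distr_eq integral_density cong: measurable_cong_sets)
  finally show "(\<integral>w. indicator B w * h (W w) \<partial>M) = c * integral\<^sup>L mu h" .
qed

lemma event_centred_cross_moment:
  assumes M: "prob_space M" and mu: "prob_space mu" and sets_eq: "sets mu = sets mu0"
    and B [measurable]: "B \<in> sets M" and c: "measure M B = c" "c > 0"
    and Wu [measurable]: "Wu \<in> M \<rightarrow>\<^sub>M mu0" and Wv [measurable]: "Wv \<in> M \<rightarrow>\<^sub>M mu0"
    and law_u: "\<And>A. A \<in> sets mu0 \<Longrightarrow> measure M ({w \<in> space M. Wu w \<in> A} \<inter> B) = measure mu A * c"
    and law_v: "\<And>A. A \<in> sets mu0 \<Longrightarrow> measure M ({w \<in> space M. Wv w \<in> A} \<inter> B) = measure mu A * c"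
    and h [measurable]: "h \<in> borel_measurable mu0" and h2: "integrable mu (\<lambda>x. (h x)\<^sup>2)"
    and uncorr: "cond_cov_event M B (\<lambda>w. h (Wu w)) (\<lambda>w. h (Wv w)) = 0"
    and m: "m = integral\<^sup>L mu h"
  shows "integrable M (\<lambda>w. indicator B w * ((h (Wu w) - m) * (h (Wv w) - m)))"
    "(\<integral>w. indicator B w * ((h (Wu w) - m) * (h (Wv w) - m)) \<partial>M) = 0"
proof -
  interpret P: prob_space M by fact
  interpret Q: prob_space mu by fact
  have h_int: "integrable mu h"
    using Q.square_integrable_imp_integrable[OF _ h2] sets_eq by (simp cong: measurable_cong_sets)
  note by_law = event_integral_by_law[OF M mu sets_eq _ B less_imp_le[OF c(2)]]
  note u1 = by_law[OF Wu law_u h h_int] and v1 = by_law[OF Wv law_v h h_int]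
  note u2 = by_law[OF Wu law_u _ h2] and v2 = by_law[OF Wv law_v _ h2]
  define huv where "huv w = indicator B w * (h (Wu w) * h (Wv w))" for w
  have huv_eq: "huv w = (indicator B w * h (Wu w)) * (indicator B w * h (Wv w))" for w
    by (simp add: huv_def indicator_def)
  have indicator_sq: "(indicator B w * x)\<^sup>2 = indicator B w * x\<^sup>2" for w and x :: real
    by (simp add: indicator_def)
  have huv_int: "integrable M huv"
    unfolding huv_eq by (rule integrable_mult_of_squares) (use u2(1) v2(1) in \<open>simp_all add: indicator_sq\<close>)
  have huv_integral: "integral\<^sup>L M huv = c * m\<^sup>2"
    using uncorr c u1(2) v1(2) unfolding cond_cov_event_def cond_exp_event_def m huv_def
    by (simp add: power2_eq_square field_simps)
  have B_int: "integrable M (indicator B :: _ \<Rightarrow> real)" and B_integral: "integral\<^sup>L M (indicator B) = c"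
    using c by (auto simp: P.emeasure_eq_measure)
  have expand: "indicator B w * ((h (Wu w) - m) * (h (Wv w) - m))
      = huv w - m * (indicator B w * h (Wu w)) - m * (indicator B w * h (Wv w)) + m\<^sup>2 * indicator B w"
    for w by (simp add: huv_def algebra_simps power2_eq_square)
  show "integrable M (\<lambda>w. indicator B w * ((h (Wu w) - m) * (h (Wv w) - m)))"
    unfolding expand using huv_int u1(1) v1(1) B_int by simp
  show "(\<integral>w. indicator B w * ((h (Wu w) - m) * (h (Wv w) - m)) \<partial>M) = 0"
    unfolding expand using huv_int u1 v1 B_int huv_integral B_integral
    by (simp add: m power2_eq_square)
qed

context sigma_finite_subalgebra
begin

lemma cond_exp_residual_orthogonal:
  assumes X_meas [measurable]: "X \<in> borel_measurable M"
    and X: "AE w in M. X w = real_cond_exp M F g w"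
    and fg: "integrable M (\<lambda>w. f w * g w)"
    and [measurable]: "f \<in> borel_measurable F" "g \<in> borel_measurable M"
  shows "integrable M (\<lambda>w. f w * (g w - X w))" "(\<integral>w. f w * (g w - X w) \<partial>M) = 0"
proof -
  have [measurable]: "f \<in> borel_measurable M"
    by (rule measurable_from_subalg[OF subalg]) fact
  have [measurable]: "real_cond_exp M F g \<in> borel_measurable M"
    by (rule measurable_from_subalg[OF subalg]) simp
  have ae: "AE w in M. f w * X w = f w * real_cond_exp M F g w"
    using X by eventually_elim simp
  have fX_int: "integrable M (\<lambda>w. f w * X w)"
    using real_cond_exp_intg(1)[OF fg] integrable_cong_AE[OF _ _ ae] by simp
  have fX_integral: "(\<integral>w. f w * X w \<partial>M) = (\<integral>w. f w * g w \<partial>M)"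
    using real_cond_exp_intg(2)[OF fg] integral_cong_AE[OF _ _ ae] by simp
  show "integrable M (\<lambda>w. f w * (g w - X w))"
    using fg fX_int by (simp add: right_diff_distrib)
  show "(\<integral>w. f w * (g w - X w) \<partial>M) = 0"
    using fg fX_int fX_integral by (simp add: right_diff_distrib)
qed

end

context finite_measure_subalgebra
begin

text \<open>For the conditional probability \<open>X\<close> of an event \<open>B\<close>, the residual \<open>e = 1\<^sub>B - X\<close> is square
  integrable and \<open>E[1\<^sub>B e] = E[e\<^sup>2]\<close>, since \<open>e\<close> is orthogonal to \<open>X\<close> itself.\<close>
lemma cond_prob_residual:
  assumes B [measurable]: "B \<in> sets M" and X_meas [measurable]: "X \<in> borel_measurable M"
    and X: "AE w in M. X w = real_cond_exp M F (indicator B) w"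
  shows "integrable M (\<lambda>w. (indicator B w - X w)\<^sup>2)"
    "integrable M (\<lambda>w. indicator B w * (indicator B w - X w))"
    "(\<integral>w. indicator B w * (indicator B w - X w) \<partial>M) = (\<integral>w. (indicator B w - X w)\<^sup>2 \<partial>M)"
proof -
  define g where "g = real_cond_exp M F (indicator B)"
  have g_meas [measurable]: "g \<in> borel_measurable F" unfolding g_def by simp
  have [measurable]: "g \<in> borel_measurable M" by (rule measurable_from_subalg[OF subalg g_meas])
  have B_int: "integrable M (indicator B :: 'a \<Rightarrow> real)"
    by (simp add: emeasure_eq_measure)
  have g_ge: "AE w in M. 0 \<le> g w" and g_le: "AE w in M. g w \<le> 1"
    unfolding g_def by (intro real_cond_exp_ge_c real_cond_exp_le_c B_int; simp)+
  have g_bounded: "AE w in M. \<bar>g w\<bar> \<le> 1"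
    using g_ge g_le by eventually_elim simp
  have X_range: "AE w in M. 0 \<le> X w \<and> X w \<le> 1"
    using X g_ge g_le by eventually_elim (simp add: g_def)
  have bounded_int: "integrable M f"
    if "f \<in> borel_measurable M" "AE w in M. \<bar>f w\<bar> \<le> 1" for f :: "'a \<Rightarrow> real"
    by (rule integrable_const_bound[of f 1]) (use that in auto)
  have e2: "(indicator B w - X w)\<^sup>2 = indicator B w * (indicator B w - X w) - X w * (indicator B w - X w)"
    for w by (simp add: power2_eq_square algebra_simps)
  have "AE w in M. \<bar>indicator B w * (indicator B w - X w)\<bar> \<le> 1"
    using X_range by eventually_elim (auto simp: indicator_def)
  then have Be_int: "integrable M (\<lambda>w. indicator B w * (indicator B w - X w))"
    by (rule bounded_int[rotated]) measurable
  have "AE w in M. \<bar>X w * (indicator B w - X w)\<bar> \<le> 1"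
    using X_range by eventually_elim (auto simp: indicator_def abs_mult intro: mult_le_one)
  then have Xe_int: "integrable M (\<lambda>w. X w * (indicator B w - X w))"
    by (rule bounded_int[rotated]) measurable
  have Xe_ae: "AE w in M. X w * (indicator B w - X w) = g w * (indicator B w - X w)"
    using X by eventually_elim (simp add: g_def)
  have "AE w in M. \<bar>g w * indicator B w\<bar> \<le> 1"
    using g_bounded by eventually_elim (simp add: indicator_def)
  then have gB_int: "integrable M (\<lambda>w. g w * indicator B w)"
    by (rule bounded_int[rotated]) measurable
  have "(\<integral>w. g w * (indicator B w - X w) \<partial>M) = 0"
    using cond_exp_residual_orthogonal(2)[OF X_meas X gB_int] by simp
  then have Xe: "(\<integral>w. X w * (indicator B w - X w) \<partial>M) = 0"
    using integral_cong_AE[OF _ _ Xe_ae] by simp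
  show "integrable M (\<lambda>w. (indicator B w - X w)\<^sup>2)"
    unfolding e2 using Be_int Xe_int by simp
  show "integrable M (\<lambda>w. indicator B w * (indicator B w - X w))" by (fact Be_int)
  show "(\<integral>w. indicator B w * (indicator B w - X w) \<partial>M) = (\<integral>w. (indicator B w - X w)\<^sup>2 \<partial>M)"
    unfolding e2 using Be_int Xe_int Xe by simp
qed

end

text \<open>A variable \<open>T\<close> with \<open>E[T e] = -l E[e\<^sup>2]\<close> forces \<open>l\<^sup>2 E[e\<^sup>2] \<le> E[T\<^sup>2]\<close>; this is Cauchy-Schwarz,
  obtained here by integrating the pointwise bound \<open>-T e \<le> (T\<^sup>2/l + l e\<^sup>2)/2\<close>.\<close>
lemma correlation_bound:
  fixes T e :: "'a \<Rightarrow> real"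
  assumes [measurable]: "T \<in> borel_measurable M" "e \<in> borel_measurable M"
    and T2: "integrable M (\<lambda>w. (T w)\<^sup>2)" and e2: "integrable M (\<lambda>w. (e w)\<^sup>2)"
    and corr: "(\<integral>w. T w * e w \<partial>M) = - l * (\<integral>w. (e w)\<^sup>2 \<partial>M)" and l: "l > 0"
  shows "l\<^sup>2 * (\<integral>w. (e w)\<^sup>2 \<partial>M) \<le> (\<integral>w. (T w)\<^sup>2 \<partial>M)"
proof -
  define q where "q = (\<integral>w. (e w)\<^sup>2 \<partial>M)"
  define A where "A = (\<integral>w. (T w)\<^sup>2 \<partial>M)"
  have amgm: "- (T w * e w) \<le> ((T w)\<^sup>2 / l + l * (e w)\<^sup>2) / 2" for w
  proof -
    have "((T w)\<^sup>2 / l + l * (e w)\<^sup>2) / 2 + T w * e w = (T w + l * e w)\<^sup>2 / (2 * l)"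
      using l by (simp add: power2_eq_square field_simps)
    moreover have "0 \<le> (T w + l * e w)\<^sup>2 / (2 * l)" using l by simp
    ultimately show ?thesis by linarith
  qed
  have Te_int: "integrable M (\<lambda>w. T w * e w)"
    by (rule integrable_mult_of_squares[OF _ _ T2 e2]) measurable
  have "l * q = (\<integral>w. - (T w * e w) \<partial>M)"
    using corr by (simp add: q_def)
  also have "\<dots> \<le> (\<integral>w. ((T w)\<^sup>2 / l + l * (e w)\<^sup>2) / 2 \<partial>M)"
    using Te_int T2 e2 amgm by (intro integral_mono) auto
  also have "\<dots> = (A / l + l * q) / 2"
    using T2 e2 by (simp add: A_def q_def)
  finally have "l * q \<le> A / l" by simp
  then show ?thesis
    using l by (simp add: A_def q_def field_simps power2_eq_square)
qed

lemma opt_actions_miss: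
  assumes s: "s \<in> {0, 1}" and miss: "opt_actions x \<noteq> {s}"
  shows "1 \<le> 4 * (of_bool (s = 1) - x)\<^sup>2"
proof -
  have "1 / 2 \<le> \<bar>of_bool (s = 1) - x\<bar>"
  proof (cases "s = 1")
    case True
    then have "\<not> x > 1/2" using miss by (auto simp: opt_actions_def)
    with True show ?thesis by simp
  next
    case False
    then have "\<not> x < 1/2" using s miss by (auto simp: opt_actions_def)
    with False show ?thesis by simp
  qed
  then have "(1 / 2)\<^sup>2 \<le> \<bar>of_bool (s = 1) - x\<bar>\<^sup>2"
    by (rule power_mono) simp
  then show ?thesis by (simp add: power2_eq_square)
qed

lemma opt_actions_eq_singleton:
  "s \<in> {0, 1} \<Longrightarrow> opt_actions x = {s} \<longleftrightarrow> (x < 1/2 \<and> s = 0) \<or> (1/2 < x \<and> s = 1)"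
  by (auto simp: opt_actions_def)

text \<open>A probability bounded below by \<open>1 - D/n\<close> is also bounded below by \<open>1 - 4D/(n + D)\<close>: for
  \<open>3D < n\<close> the latter is the smaller number, otherwise it is nonpositive.\<close>
lemma ratio_bound_weaken:
  fixes p D n :: real
  assumes n: "n \<ge> 1" and D: "D \<ge> 0" and p: "p \<ge> 0" "p \<ge> 1 - D / n"
  shows "p \<ge> 1 - 4 * D / (n + D)"
proof (cases "3 * D \<ge> n")
  case True
  then have "4 * D / (n + D) \<ge> 1" using n D by (simp add: field_simps)
  then show ?thesis using p by linarith
next
  case False
  then have "D / n \<le> 4 * D / (n + D)"
    using n D by (simp add: field_simps) (smt (verit) mult_left_mono)
  then show ?thesis using p by linarith
qed

section \<open>The uncorrelated-signals model\<close>

locale uncorrelated_signals = distinct_likelihood_pair mu0 mu1 + P: prob_space M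
  for mu0 mu1 :: "'o measure" and M :: "'w measure" +
  fixes S :: "'w \<Rightarrow> nat" and V :: "'a set" and W :: "'a \<Rightarrow> 'w \<Rightarrow> 'o"
    and F :: "'a \<Rightarrow> 'w measure" and X :: "'w \<Rightarrow> real"
  assumes S_meas [measurable]: "S \<in> M \<rightarrow>\<^sub>M count_space UNIV"
    and S_vals: "\<And>w. w \<in> space M \<Longrightarrow> S w \<in> {0, 1}"
    and S_unif: "measure M {w \<in> space M. S w = 1} = 1/2"
    and V_fin: "finite V"
    and W_meas: "\<And>u. u \<in> V \<Longrightarrow> W u \<in> M \<rightarrow>\<^sub>M mu0"
    and W_law0: "\<And>u A. u \<in> V \<Longrightarrow> A \<in> sets mu0 \<Longrightarrow>
        measure M {w \<in> space M. W u w \<in> A \<and> S w = 0}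
          = measure mu0 A * measure M {w \<in> space M. S w = 0}"
    and W_law1: "\<And>u A. u \<in> V \<Longrightarrow> A \<in> sets mu0 \<Longrightarrow>
        measure M {w \<in> space M. W u w \<in> A \<and> S w = 1}
          = measure mu1 A * measure M {w \<in> space M. S w = 1}"
    and uncorr: "\<And>u v s. u \<in> V \<Longrightarrow> v \<in> V \<Longrightarrow> u \<noteq> v \<Longrightarrow> s \<in> {0, 1} \<Longrightarrow>
        cond_cov_event M {w \<in> space M. S w = s}
          (\<lambda>w. llr mu1 mu0 (W u w)) (\<lambda>w. llr mu1 mu0 (W v w)) = 0"
    and F_sub: "\<And>u. u \<in> V \<Longrightarrow> subalgebra M (F u)"
    and F_ge: "\<And>u. u \<in> V \<Longrightarrow> W u \<in> F u \<rightarrow>\<^sub>M mu0"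
    and X_meas [measurable]: "X \<in> borel_measurable M"
    and X_common: "AE w in M. \<forall>u \<in> V.
        X w = real_cond_exp M (F u) (indicator {w \<in> space M. S w = 1}) w"
begin

definition state_event :: "nat \<Rightarrow> 'w set" where
  "state_event s = {w \<in> space M. S w = s}"

definition law :: "nat \<Rightarrow> 'o measure" where
  "law s = (if s = 1 then mu1 else mu0)"

definition llr_mean :: "nat \<Rightarrow> real" where
  "llr_mean s = (\<integral>x. z x \<partial>law s)"

definition llr_var :: "nat \<Rightarrow> real" where
  "llr_var s = prob_space.variance (law s) z"

definition deviation :: "'a \<Rightarrow> 'w \<Rightarrow> real" where
  "deviation u w = z (W u w) - llr_mean (S w)"

definition residual :: "'w \<Rightarrow> real" where
  "residual w = indicator (state_event 1) w - X w"

lemma state_event_sets [measurable]: "state_event s \<in> sets M"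
  unfolding state_event_def by measurable

lemma measure_state_event:
  assumes "s \<in> {0, 1}"
  shows "measure M (state_event s) = 1/2"
proof -
  have "state_event 0 = space M - state_event 1"
    using S_vals by (auto simp: state_event_def)
  then have "measure M (state_event 0) = 1/2"
    using P.prob_compl[OF state_event_sets[of 1]] S_unif by (simp add: state_event_def)
  with assms S_unif show ?thesis
    by (auto simp: state_event_def)
qed

lemma prob_space_law: "prob_space (law s)"
  by (simp add: law_def M0.prob_space_axioms M1.prob_space_axioms)

lemma sets_law: "sets (law s) = sets mu0"
  by (simp add: law_def sets_eq)

lemma llr_square_integrable_law: "integrable (law s) (\<lambda>x. (z x)\<^sup>2)"
  by (simp add: law_def llr_square_integrable0 llr_square_integrable1)

lemma llr_integrable_law: "integrable (law s) z"
  by (simp add: law_def llr_integrable0 llr_integrable1)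

lemma signal_law:
  assumes u: "u \<in> V" and s: "s \<in> {0, 1}" and A: "A \<in> sets mu0"
  shows "measure M ({w \<in> space M. W u w \<in> A} \<inter> state_event s) = measure (law s) A * (1/2)"
proof -
  have "{w \<in> space M. W u w \<in> A} \<inter> state_event s = {w \<in> space M. W u w \<in> A \<and> S w = s}"
    by (auto simp: state_event_def)
  moreover have "measure M {w \<in> space M. W u w \<in> A \<and> S w = s} = measure (law s) A * measure M (state_event s)"
    using s W_law0[OF u A] W_law1[OF u A] unfolding law_def state_event_def by auto
  ultimately show ?thesis
    using measure_state_event[OF s] by simp
qed

lemma state_integral:
  fixes h :: "'o \<Rightarrow> real"
  assumes u: "u \<in> V" and s: "s \<in> {0, 1}" and h: "h \<in> borel_measurable mu0"
    and h_int: "integrable (law s) h"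
  shows "integrable M (\<lambda>w. indicator (state_event s) w * h (W u w))"
    "(\<integral>w. indicator (state_event s) w * h (W u w) \<partial>M) = 1/2 * integral\<^sup>L (law s) h"
  using event_integral_by_law[of M "law s" mu0 "W u" "state_event s" "1/2" h]
    prob_space_law sets_law W_meas[OF u] signal_law[OF u s] h h_int P.prob_space_axioms
  by simp_all

lemma state_cross_moment:
  assumes u: "u \<in> V" and v: "v \<in> V" and s: "s \<in> {0, 1}"
  defines "c w \<equiv> indicator (state_event s) w * ((z (W u w) - llr_mean s) * (z (W v w) - llr_mean s))"
  shows "integrable M c" "integral\<^sup>L M c = (if u = v then llr_var s / 2 else 0)"
proof -
  have "integrable M c \<and> integral\<^sup>L M c = (if u = v then llr_var s / 2 else 0)"
  proof (cases "u = v")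
    case True
    have c_eq: "c = (\<lambda>w. indicator (state_event s) w * (z (W u w) - llr_mean s)\<^sup>2)"
      using True unfolding c_def by (simp add: power2_eq_square)
    have sq_meas: "(\<lambda>x. (z x - llr_mean s)\<^sup>2) \<in> borel_measurable mu0" by measurable
    interpret L: prob_space "law s" by (rule prob_space_law)
    have sq_int: "integrable (law s) (\<lambda>x. (z x - llr_mean s)\<^sup>2)"
      using llr_square_integrable_law llr_integrable_law by (simp add: power2_diff)
    note diag = state_integral[OF u s sq_meas sq_int]
    have "(if u = v then llr_var s / 2 else 0) = 1/2 * (\<integral>x. (z x - llr_mean s)\<^sup>2 \<partial>law s)"
      using True unfolding llr_var_def llr_mean_def by simp
    with diag show ?thesis
      unfolding c_eq by (simp only:)
  next
    case False
    have uncorr_s: "cond_cov_event M (state_event s) (\<lambda>w. z (W u w)) (\<lambda>w. z (W v w)) = 0"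
      using uncorr[OF u v False s] by (simp add: state_event_def)
    have law_u: "\<And>A. A \<in> sets mu0 \<Longrightarrow>
        measure M ({w \<in> space M. W u w \<in> A} \<inter> state_event s) = measure (law s) A * (1/2)"
      by (rule signal_law[OF u s])
    have law_v: "\<And>A. A \<in> sets mu0 \<Longrightarrow>
        measure M ({w \<in> space M. W v w \<in> A} \<inter> state_event s) = measure (law s) A * (1/2)"
      by (rule signal_law[OF v s])
    have half: "(0::real) < 1/2" by simp
    note cross = event_centred_cross_moment[OF P.prob_space_axioms prob_space_law sets_law
        state_event_sets measure_state_event[OF s] half W_meas[OF u] W_meas[OF v]
        law_u law_v llr_measurable llr_square_integrable_law uncorr_s llr_mean_def]
    from False have "(if u = v then llr_var s / 2 else 0) = 0" by simp
    with cross show ?thesis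
      unfolding c_def by (simp only:)
  qed
  then show "integrable M c" "integral\<^sup>L M c = (if u = v then llr_var s / 2 else 0)"
    by simp_all
qed

lemma deviation_measurable [measurable]: "u \<in> V \<Longrightarrow> deviation u \<in> borel_measurable M"
  using W_meas[of u] unfolding deviation_def by measurable

lemma deviation_product:
  assumes "w \<in> space M"
  shows "deviation u w * deviation v w = (\<Sum>s\<in>{0, 1}.
     indicator (state_event s) w * ((z (W u w) - llr_mean s) * (z (W v w) - llr_mean s)))"
  using S_vals[OF assms] assms by (auto simp: deviation_def state_event_def indicator_def)

lemma deviation_cross_moment:
  assumes u: "u \<in> V" and v: "v \<in> V"
  shows "integrable M (\<lambda>w. deviation u w * deviation v w)"
    "(\<integral>w. deviation u w * deviation v w \<partial>M) = (if u = v then (llr_var 0 + llr_var 1) / 2 else 0)"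
proof -
  define c where "c s w = indicator (state_event s) w * ((z (W u w) - llr_mean s) * (z (W v w) - llr_mean s))"
    for s w
  have c_int: "integrable M (c s)" and c_integral: "integral\<^sup>L M (c s) = (if u = v then llr_var s / 2 else 0)"
    if "s \<in> {0, 1}" for s
    using state_cross_moment[OF u v that] by (simp_all add: c_def[abs_def])
  have sum_int: "integrable M (\<lambda>w. \<Sum>s\<in>{0, 1}. c s w)"
    using c_int by (intro Bochner_Integration.integrable_sum) auto
  have sum_integral: "(\<integral>w. (\<Sum>s\<in>{0, 1}. c s w) \<partial>M) = (if u = v then (llr_var 0 + llr_var 1) / 2 else 0)"
    using c_int c_integral by (simp add: Bochner_Integration.integral_sum add_divide_distrib)
  have prod_eq: "deviation u w * deviation v w = (\<Sum>s\<in>{0, 1}. c s w)" if "w \<in> space M" for w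
    unfolding c_def by (rule deviation_product[OF that])
  show "integrable M (\<lambda>w. deviation u w * deviation v w)"
    using sum_int by (subst Bochner_Integration.integrable_cong[OF refl prod_eq])
  show "(\<integral>w. deviation u w * deviation v w \<partial>M) = (if u = v then (llr_var 0 + llr_var 1) / 2 else 0)"
    using sum_integral by (subst Bochner_Integration.integral_cong[OF refl prod_eq])
qed

lemma total_deviation_second_moment:
  shows "integrable M (\<lambda>w. (\<Sum>u\<in>V. deviation u w)\<^sup>2)"
    "(\<integral>w. (\<Sum>u\<in>V. deviation u w)\<^sup>2 \<partial>M) = card V * (llr_var 0 + llr_var 1) / 2"
proof -
  have sq: "(\<Sum>u\<in>V. deviation u w)\<^sup>2 = (\<Sum>u\<in>V. \<Sum>v\<in>V. deviation u w * deviation v w)" for w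
    unfolding power2_eq_square by (rule sum_product)
  have inner_int: "integrable M (\<lambda>w. \<Sum>v\<in>V. deviation u w * deviation v w)" if "u \<in> V" for u
    using deviation_cross_moment(1) that by (intro Bochner_Integration.integrable_sum) auto
  show "integrable M (\<lambda>w. (\<Sum>u\<in>V. deviation u w)\<^sup>2)"
    unfolding sq by (rule Bochner_Integration.integrable_sum) (rule inner_int)
  have "(\<integral>w. (\<Sum>u\<in>V. deviation u w)\<^sup>2 \<partial>M)
      = (\<Sum>u\<in>V. (\<integral>w. (\<Sum>v\<in>V. deviation u w * deviation v w) \<partial>M))"
    unfolding sq by (rule Bochner_Integration.integral_sum) (rule inner_int)
  also have "\<dots> = (\<Sum>u\<in>V. \<Sum>v\<in>V. (\<integral>w. deviation u w * deviation v w \<partial>M))"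
    using deviation_cross_moment(1)
    by (intro sum.cong refl Bochner_Integration.integral_sum) auto
  also have "\<dots> = (\<Sum>u\<in>V. \<Sum>v\<in>V. if u = v then (llr_var 0 + llr_var 1) / 2 else 0)"
    using deviation_cross_moment(2) by (intro sum.cong refl) auto
  also have "\<dots> = card V * (llr_var 0 + llr_var 1) / 2"
    using V_fin by simp
  finally show "(\<integral>w. (\<Sum>u\<in>V. deviation u w)\<^sup>2 \<partial>M) = card V * (llr_var 0 + llr_var 1) / 2" .
qed

lemma finite_measure_subalgebra_F: "u \<in> V \<Longrightarrow> finite_measure_subalgebra M (F u)"
  using F_sub P.finite_measure_axioms
  by (simp add: finite_measure_subalgebra_def finite_measure_subalgebra_axioms_def)

lemma X_version: "u \<in> V \<Longrightarrow> AE w in M. X w = real_cond_exp M (F u) (indicator (state_event 1)) w"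
  using X_common unfolding state_event_def by eventually_elim auto

text \<open>The key identity: every deviation correlates with the residual \<open>e\<close> of the common belief
  as \<open>E[deviation u * e] = -K E[e\<^sup>2]\<close> with \<open>K = E\<^sub>1 z - E\<^sub>0 z\<close>.  Indeed the deviation equals
  \<open>(z(W u) - E\<^sub>0 z) - K 1{S = 1}\<close>; the first term is \<open>F u\<close>-measurable, hence orthogonal to \<open>e\<close>,
  and \<open>E[1{S = 1} e] = E[e\<^sup>2]\<close>.\<close>
lemma residual_correlation:
  assumes u: "u \<in> V"
  shows "integrable M (\<lambda>w. (residual w)\<^sup>2)"
    "integrable M (\<lambda>w. deviation u w * residual w)"
    "(\<integral>w. deviation u w * residual w \<partial>M) = - (llr_mean 1 - llr_mean 0) * (\<integral>w. (residual w)\<^sup>2 \<partial>M)"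
proof -
  interpret C: finite_measure_subalgebra M "F u" by (rule finite_measure_subalgebra_F[OF u])
  define J :: "'w \<Rightarrow> real" where "J = indicator (state_event 1)"
  define K where "K = llr_mean 1 - llr_mean 0"
  have [measurable]: "W u \<in> M \<rightarrow>\<^sub>M mu0" by (rule W_meas[OF u])
  have f_meas: "(\<lambda>w. z (W u w) - llr_mean 0) \<in> borel_measurable (F u)"
    using F_ge[OF u] by measurable
  have J_int: "integrable M J"
    unfolding J_def by (simp add: P.emeasure_eq_measure)
  have Jz_int: "integrable M (\<lambda>w. J w * z (W u w))"
    unfolding J_def by (rule state_integral(1)[OF u _ llr_measurable llr_integrable_law]) simp
  have fJ_int: "integrable M (\<lambda>w. (z (W u w) - llr_mean 0) * J w)"
  proof -
    have "(\<lambda>w. (z (W u w) - llr_mean 0) * J w) = (\<lambda>w. J w * z (W u w) - llr_mean 0 * J w)"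
      by (simp add: fun_eq_iff algebra_simps)
    then show ?thesis
      using Bochner_Integration.integrable_diff[OF Jz_int
          Bochner_Integration.integrable_mult_right[OF J_int]] by simp
  qed
  note orth = C.cond_exp_residual_orthogonal[OF X_meas X_version[OF u] fJ_int[unfolded J_def] f_meas]
  note res = C.cond_prob_residual[OF state_event_sets X_meas X_version[OF u]]
  have dev_res: "deviation u w * residual w
      = (z (W u w) - llr_mean 0) * (J w - X w) - K * (J w * (J w - X w))" if "w \<in> space M" for w
    using S_vals[OF that] that
    by (auto simp: deviation_def residual_def J_def K_def state_event_def algebra_simps)
  show "integrable M (\<lambda>w. (residual w)\<^sup>2)"
    using res(1) by (simp add: residual_def)
  show "integrable M (\<lambda>w. deviation u w * residual w)"
    using orth(1) res(2)
    by (subst Bochner_Integration.integrable_cong[OF refl dev_res]) (simp_all add: J_def)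
  have "(\<integral>w. deviation u w * residual w \<partial>M)
      = (\<integral>w. (z (W u w) - llr_mean 0) * (J w - X w) \<partial>M) - K * (\<integral>w. J w * (J w - X w) \<partial>M)"
    using orth(1) res(2)
    by (subst Bochner_Integration.integral_cong[OF refl dev_res]) (simp_all add: J_def)
  also have "\<dots> = - K * (\<integral>w. (residual w)\<^sup>2 \<partial>M)"
    using orth(2) res(3) by (simp add: J_def residual_def)
  finally show "(\<integral>w. deviation u w * residual w \<partial>M) = - (llr_mean 1 - llr_mean 0) * (\<integral>w. (residual w)\<^sup>2 \<partial>M)"
    by (simp add: K_def)
qed

text \<open>Applying the correlation bound to the summed deviation: the mean squared residual of the
  common belief is at most \<open>D/(4n)\<close>.\<close>
lemma residual_bound:
  assumes V: "V \<noteq> {}"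
  shows "4 * (\<integral>w. (residual w)\<^sup>2 \<partial>M) \<le> noise_signal_ratio mu1 mu0 / card V"
proof -
  from V obtain u0 where u0: "u0 \<in> V" by blast
  define n where "n = real (card V)"
  define K where "K = llr_mean 1 - llr_mean 0"
  define q where "q = (\<integral>w. (residual w)\<^sup>2 \<partial>M)"
  define T where "T w = (\<Sum>u\<in>V. deviation u w)" for w
  have n_pos: "n > 0" using V V_fin by (simp add: n_def card_gt_0_iff)
  have K_pos: "K > 0" using llr_mean_gap_pos by (simp add: K_def llr_mean_def law_def)
  have [measurable]: "T \<in> borel_measurable M" "residual \<in> borel_measurable M"
    unfolding T_def residual_def by measurable
  have "(\<integral>w. T w * residual w \<partial>M) = (\<Sum>u\<in>V. \<integral>w. deviation u w * residual w \<partial>M)"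
    unfolding T_def sum_distrib_right
    using residual_correlation(2) by (intro Bochner_Integration.integral_sum)
  also have "\<dots> = (\<Sum>u\<in>V. - K * q)"
    using residual_correlation(3) by (intro sum.cong) (simp_all add: K_def q_def)
  also have "\<dots> = - (n * K) * q"
    by (simp add: n_def)
  finally have "(n * K)\<^sup>2 * q \<le> (\<integral>w. (T w)\<^sup>2 \<partial>M)"
    using total_deviation_second_moment(1) residual_correlation(1)[OF u0] n_pos K_pos
    unfolding q_def T_def by (intro correlation_bound) (simp_all add: T_def)
  also have "\<dots> = n * (llr_var 0 + llr_var 1) / 2"
    using total_deviation_second_moment(2) by (simp add: T_def n_def)
  finally have "n * (n * K\<^sup>2 * q) \<le> n * ((llr_var 0 + llr_var 1) / 2)"
    by (simp add: power_mult_distrib power2_eq_square algebra_simps)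
  then have "n * K\<^sup>2 * q \<le> (llr_var 0 + llr_var 1) / 2"
    using n_pos by simp
  then have "4 * q \<le> 2 * (llr_var 1 + llr_var 0) / K\<^sup>2 / n"
    using n_pos K_pos by (simp add: field_simps)
  also have "\<dots> = noise_signal_ratio mu1 mu0 / n"
    by (simp add: noise_signal_ratio_eq K_def llr_mean_def llr_var_def law_def)
  finally show ?thesis by (simp add: q_def n_def)
qed

text \<open>The action set misses the state only where the residual is at least \<open>1/2\<close>, so by
  Markov's inequality the probability of a miss is at most \<open>4 E[e\<^sup>2]\<close>.\<close>
lemma misclassification_bound:
  assumes e2: "integrable M (\<lambda>w. (residual w)\<^sup>2)"
  shows "1 - measure M {w \<in> space M. opt_actions (X w) = {S w}} \<le> 4 * (\<integral>w. (residual w)\<^sup>2 \<partial>M)"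
proof -
  define Hit where "Hit = {w \<in> space M. opt_actions (X w) = {S w}}"
  have Hit_eq: "Hit = {w \<in> space M. (X w < 1/2 \<and> S w = 0) \<or> (1/2 < X w \<and> S w = 1)}"
    unfolding Hit_def using opt_actions_eq_singleton[OF S_vals] by blast
  have Hit_sets [measurable]: "Hit \<in> sets M"
    unfolding Hit_eq by measurable
  have miss_le: "indicator (space M - Hit) w \<le> 4 * (residual w)\<^sup>2" if w: "w \<in> space M" for w
  proof (cases "w \<in> Hit")
    case False
    then have "1 \<le> 4 * (of_bool (S w = 1) - X w)\<^sup>2"
      using w by (intro opt_actions_miss S_vals) (auto simp: Hit_def)
    with False w show ?thesis
      by (simp add: residual_def state_event_def indicator_def)
  qed (simp add: indicator_def)
  have "measure M (space M - Hit) = (\<integral>w. indicator (space M - Hit) w \<partial>M)"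
    by simp
  also have "\<dots> \<le> (\<integral>w. 4 * (residual w)\<^sup>2 \<partial>M)"
    using e2 miss_le by (intro integral_mono) (auto simp: P.emeasure_eq_measure)
  finally show ?thesis
    using P.prob_compl[OF Hit_sets] by (simp add: Hit_def)
qed

lemma correct_action_probability:
  assumes "V \<noteq> {}"
  shows "measure M {w \<in> space M. opt_actions (X w) = {S w}} \<ge> 1 - noise_signal_ratio mu1 mu0 / card V"
proof -
  from assms obtain u where u: "u \<in> V" by blast
  with misclassification_bound[OF residual_correlation(1)[OF u]] residual_bound[OF assms]
  show ?thesis by linarith
qed

end

theorem theorem2:
  fixes M :: "'w measure" and S :: "'w \<Rightarrow> nat"
    and mu0 mu1 :: "'o measure"
    and V :: "'a set" and W :: "'a \<Rightarrow> 'w \<Rightarrow> 'o"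
    and F :: "'a \<Rightarrow> 'w measure" and X :: "'w \<Rightarrow> real"
  assumes M: "prob_space M"
    and S_meas: "S \<in> M \<rightarrow>\<^sub>M count_space UNIV"
    and S_vals: "\<And>w. w \<in> space M \<Longrightarrow> S w \<in> {0, 1}"
    and S_unif: "measure M {w \<in> space M. S w = 1} = 1/2"
    and mu0: "prob_space mu0" and mu1: "prob_space mu1"
    and sets_eq: "sets mu1 = sets mu0"
    and mu_ne: "mu0 \<noteq> mu1"
    and ac01: "absolutely_continuous mu0 mu1" and ac10: "absolutely_continuous mu1 mu0"
    and z2_int0: "integrable mu0 (\<lambda>x. (llr mu1 mu0 x)\<^sup>2)"
    and z2_int1: "integrable mu1 (\<lambda>x. (llr mu1 mu0 x)\<^sup>2)"
    and V_fin: "finite V"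
    and W_meas: "\<And>u. u \<in> V \<Longrightarrow> W u \<in> M \<rightarrow>\<^sub>M mu0"
    and W_law0: "\<And>u A. u \<in> V \<Longrightarrow> A \<in> sets mu0 \<Longrightarrow>
        measure M {w \<in> space M. W u w \<in> A \<and> S w = 0}
          = measure mu0 A * measure M {w \<in> space M. S w = 0}"
    and W_law1: "\<And>u A. u \<in> V \<Longrightarrow> A \<in> sets mu0 \<Longrightarrow>
        measure M {w \<in> space M. W u w \<in> A \<and> S w = 1}
          = measure mu1 A * measure M {w \<in> space M. S w = 1}"
    and uncorr: "\<And>u v s. u \<in> V \<Longrightarrow> v \<in> V \<Longrightarrow> u \<noteq> v \<Longrightarrow> s \<in> {0, 1} \<Longrightarrow>
        cond_cov_event M {w \<in> space M. S w = s}
          (\<lambda>w. llr mu1 mu0 (W u w)) (\<lambda>w. llr mu1 mu0 (W v w)) = 0"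
    and F_sub: "\<And>u. u \<in> V \<Longrightarrow> subalgebra M (F u)"
    and F_ge: "\<And>u. u \<in> V \<Longrightarrow> W u \<in> F u \<rightarrow>\<^sub>M mu0"
    and F_le: "\<And>u. u \<in> V \<Longrightarrow> sets (F u) \<subseteq>
        sigma_sets (space M) (\<Union>v\<in>V. {W v -` A \<inter> space M | A. A \<in> sets mu0})"
    and common_knowledge: "\<And>u v. u \<in> V \<Longrightarrow> v \<in> V \<Longrightarrow>
        \<exists>Y \<in> borel_measurable (F v).
          AE w in M. real_cond_exp M (F u) (indicator {w \<in> space M. S w = 1}) w = Y w"
    and X_meas: "X \<in> borel_measurable M"
    and X_common: "AE w in M. \<forall>u \<in> V.
        X w = real_cond_exp M (F u) (indicator {w \<in> space M. S w = 1}) w"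
  shows "measure M {w \<in> space M. opt_actions (X w) = {S w}}
           \<ge> 1 - 4 * noise_signal_ratio mu1 mu0 / (real (card V) + noise_signal_ratio mu1 mu0)"
proof -
  txt \<open>All hypotheses except common knowledge and the upper bound on \<open>F u\<close> enter the model.\<close>
  interpret uncorrelated_signals mu0 mu1 M S V W F X
    by (intro uncorrelated_signals.intro distinct_likelihood_pair.intro likelihood_pair.intro
        uncorrelated_signals_axioms.intro distinct_likelihood_pair_axioms.intro
        likelihood_pair_axioms.intro; fact assms)
  show ?thesis
  proof (cases "V = {}")
    case True
    txt \<open>Without agents the bound is \<open>1 - 4 = -3\<close>.\<close>
    with noise_signal_ratio_pos
    have "1 - 4 * noise_signal_ratio mu1 mu0 / (real (card V) + noise_signal_ratio mu1 mu0) = -3"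
      by simp
    then show ?thesis
      using measure_nonneg[of M "{w \<in> space M. opt_actions (X w) = {S w}}"] by linarith
  next
    case False
    then have "real (card V) \<ge> 1"
      using V_fin by (simp add: Suc_le_eq card_gt_0_iff)
    with correct_action_probability[OF False] noise_signal_ratio_pos show ?thesis
      by (intro ratio_bound_weaken) (simp_all add: measure_nonneg)
  qed
qed

end
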